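(* Let the switch times returned by Algorithm 1 (described in the context) be $(t_k,t_{k-1},\dots,t_1)$ with $t_k<\dots<t_1$. Then for any feasible switch time sequence $(t'_{k'},t'_{k'-1},\dots,t'_1)$ we have $t_i\le t'_i$ for all $i$ with $1\le i\le\min(k,k')$.
   Context: Let $\mathcal{S}=\{s^{(1)},\dots,s^{(n)}\}$ and $\mathcal{A}=\{a^{(1)},\dots,a^{(m)}\}$ be finite sets, $\mathcal{T}:\mathcal{S}\times\mathcal{A}\to\Delta(\mathcal{S})$ a Markov transition kernel, $\gamma\in[0,1]$, and $T\ge1$ an integer horizon. Let $\pi^{\mathrm{E}}=(\pi^{\mathrm{E}}_t)_{t=0}^{T-1}$ be a time-varying policy with each $\pi^{\mathrm{E}}_t(\cdot|s)$ a probability distribution on $\mathcal{A}$ and $\pi^{\mathrm{E}}_t(a|s)\in(0,1]$. For $k=1,\dots,m$ let $P_{a^{(k)}}\in\mathbb{R}^{n\times n}$ have $(i,j)$ entry $\mathcal{T}(s^{(j)}|s^{(i)},a^{(k)})$, $\mathbf{P}=\begin{bmatrix}P_{a^{(1)}}^\top&\cdots&P_{a^{(m)}}^\top\end{bmatrix}^\top\in\mathbb{R}^{mn\times n}$, $\mathbf{E}=\mathbf{1}_m\otimes\mathbf{I}_n$. For each $t$ let $\pi^{\log}_t\in\mathbb{R}^{mn}$ have entry $\log\pi^{\mathrm{E}}_t(a^{(k)}|s^{(i)})$ in position $(k-1)n+i$. Define $\mathcal{R}^{\mathrm{E}}$ as the set of pairs $(r,\nu)$, $r=(r_0,\dots,r_{T-1})$,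 $r_t\in\mathbb{R}^{mn}$, $\nu=(\nu_0,\dots,\nu_{T-1})$, $\nu_t\in\mathbb{R}^n$, such that $r_t-\mathbf{E}\nu_t+\gamma\mathbf{P}\nu_{t+1}=\pi^{\log}_t$ for $0\le t\le T-1$, with $\nu_T:=0$. A feasible switch time sequence is a sequence of integers $T>t'_1>t'_2>\dots>t'_{k'}>0$ such that, with $t'_0=T$ and $t'_{k'+1}=0$, there exists $(r,\nu)\in\mathcal{R}^{\mathrm{E}}$ with $r_t$ constant for $t$ in each interval $t'_{i+1}\le t<t'_i$, $i=0,\dots,k'$. For integers $0\le i<j\le T$ and $\nu_o\in\mathbb{R}^n$, let $\mathcal{R}^{\mathrm{inv}}_{i:j}(\nu_o)$ be the set of tuples $(\bar r,\nu_i,\dots,\nu_{j-1})$ with $\bar r\in\mathbb{R}^{mn}$, $\nu_l\in\mathbb{R}^n$, such that $\bar r-\mathbf{E}\nu_l+\gamma\mathbf{P}\nu_{l+1}=\pi^{\log}_l$ for $l=i,\dots,j-1$, where $\nu_j:=\nu_o$. By convention $\mathcal{R}^{\mathrm{inv}}_{-1:j}(\nu_o)=\emptyset$. Algorithm 1 (Greedy Interval Partitioning), input $T,\mathbf{P},\pi^{\mathrm{E}}$: set $Z\leftarrow()$, $R\leftarrow()$, $V_t\leftarrow0\in\mathbb{R}^n$ for $0\le t\le T$; $l\leftarrow-1$, $u\leftarrow T$, $j\leftarrow T-1$, $\tau\leftarrow T$. While $j\ge0$: if $\mathcal{R}^{\mathrm{inv}}_{j:\tau}(V_\tau)\ne\emptyset$,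 set $u\leftarrow j$ and pick some $(\bar r,\bar\nu)\in\mathcal{R}^{\mathrm{inv}}_{j:\tau}(V_\tau)$; otherwise set $l\leftarrow j$, and if moreover $u=l+1$, prepend $u$ to $Z$ and $\bar r$ to $R$, set $V_t\leftarrow\bar\nu_t$ for $t\in[u,\tau-1]$, $\tau\leftarrow u$, $l\leftarrow-1$. In either case then set $j\leftarrow\lfloor(l+u)/2\rfloor$. After the loop, prepend $\bar r$ to $R$, set $V_t\leftarrow\bar\nu_t$ for $t\in[0,\tau-1]$, and return $Z$ (switch times) and $R$. *)

theory Defs
  imports Complex_Main
begin

text \<open>The kernel is P s a s' = T(s' | s, a). A vector in R^{mn} indexed by (k,i) is a
  function 's => 'a => real; a vector in R^n is a function 's => real.
  Entry (a,s) of  r - E nu_t + gamma P nu_{t+1}  is computed by bellman_res.\<close>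

definition bellman_res ::
  "('s::finite \<Rightarrow> 'a \<Rightarrow> 's \<Rightarrow> real) \<Rightarrow> real \<Rightarrow> ('s \<Rightarrow> 'a \<Rightarrow> real) \<Rightarrow> ('s \<Rightarrow> real) \<Rightarrow> ('s \<Rightarrow> real)
    \<Rightarrow> 's \<Rightarrow> 'a \<Rightarrow> real" where
  "bellman_res P \<gamma> rt nut nut1 s a = rt s a - nut s + \<gamma> * (\<Sum>s'\<in>UNIV. P s a s' * nut1 s')"

text \<open>The set R^E (nu_T := 0 is imposed as nu T = 0).\<close>
definition RE ::
  "('s::finite \<Rightarrow> 'a \<Rightarrow> 's \<Rightarrow> real) \<Rightarrow> real \<Rightarrow> nat \<Rightarrow> (nat \<Rightarrow> 's \<Rightarrow> 'a \<Rightarrow> real)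
    \<Rightarrow> ((nat \<Rightarrow> 's \<Rightarrow> 'a \<Rightarrow> real) \<times> (nat \<Rightarrow> 's \<Rightarrow> real)) set" where
  "RE P \<gamma> T \<pi> = {(r, \<nu>). \<nu> T = (\<lambda>_. 0) \<and>
     (\<forall>t<T. \<forall>s a. bellman_res P \<gamma> (r t) (\<nu> t) (\<nu> (Suc t)) s a = ln (\<pi> t s a))}"

text \<open>R^inv_{i:j}(nu_o): only the components nu_i..nu_{j-1} of the second entry matter;
  nu_j is replaced by nu_o.\<close>
definition Rinv ::
  "('s::finite \<Rightarrow> 'a \<Rightarrow> 's \<Rightarrow> real) \<Rightarrow> real \<Rightarrow> (nat \<Rightarrow> 's \<Rightarrow> 'a \<Rightarrow> real) \<Rightarrow> nat \<Rightarrow> nat \<Rightarrow> ('s \<Rightarrow> real)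
    \<Rightarrow> (('s \<Rightarrow> 'a \<Rightarrow> real) \<times> (nat \<Rightarrow> 's \<Rightarrow> real)) set" where
  "Rinv P \<gamma> \<pi> i j nuo = {(rb, \<nu>). \<forall>l. i \<le> l \<and> l < j \<longrightarrow>
     (\<forall>s a. bellman_res P \<gamma> rb (\<nu> l) (if Suc l = j then nuo else \<nu> (Suc l)) s a = ln (\<pi> l s a))}"

text \<open>Feasible switch time sequence T > t' 1 > ... > t' k' > 0 (indices 1..k').\<close>
definition feasible_switch ::
  "('s::finite \<Rightarrow> 'a \<Rightarrow> 's \<Rightarrow> real) \<Rightarrow> real \<Rightarrow> nat \<Rightarrow> (nat \<Rightarrow> 's \<Rightarrow> 'a \<Rightarrow> real)
    \<Rightarrow> nat \<Rightarrow> (nat \<Rightarrow> nat) \<Rightarrow> bool" where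
  "feasible_switch P \<gamma> T \<pi> k' t' \<longleftrightarrow>
     (\<forall>i\<in>{1..k'}. 0 < t' i \<and> t' i < T) \<and>
     (\<forall>i. 1 \<le> i \<and> i < k' \<longrightarrow> t' (Suc i) < t' i) \<and>
     (let ext = (\<lambda>i. if i = 0 then T else if i = Suc k' then 0 else t' i) in
      \<exists>r \<nu>. (r, \<nu>) \<in> RE P \<gamma> T \<pi> \<and>
        (\<forall>i\<le>k'. \<forall>t s. ext (Suc i) \<le> t \<and> t < ext i \<and> ext (Suc i) \<le> s \<and> s < ext i
            \<longrightarrow> r t = r s))"

text \<open>State of Algorithm 1 (Greedy Interval Partitioning). l and j are integers
  (l may be -1); rbar / nubar hold the most recently picked element.\<close>
record ('s, 'a) gip_state =
  gZ :: "nat list"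
  gR :: "('s \<Rightarrow> 'a \<Rightarrow> real) list"
  gV :: "nat \<Rightarrow> 's \<Rightarrow> real"
  gl :: int
  gu :: nat
  gj :: int
  gtau :: nat
  grbar :: "'s \<Rightarrow> 'a \<Rightarrow> real"
  gnubar :: "nat \<Rightarrow> 's \<Rightarrow> real"

definition gip_init :: "nat \<Rightarrow> ('s, 'a) gip_state" where
  "gip_init T = \<lparr> gZ = [], gR = [], gV = (\<lambda>_ _. 0), gl = -1, gu = T, gj = int T - 1,
      gtau = T, grbar = (\<lambda>_ _. 0), gnubar = (\<lambda>_ _. 0) \<rparr>"

text \<open>One iteration of the while loop (body executed only when j \<ge> 0);
  the choice of (rbar, nubar) is nondeterministic.\<close>
inductive gip_step ::
  "('s::finite \<Rightarrow> 'a \<Rightarrow> 's \<Rightarrow> real) \<Rightarrow> real \<Rightarrow> (nat \<Rightarrow> 's \<Rightarrow> 'a \<Rightarrow> real)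
    \<Rightarrow> ('s, 'a) gip_state \<Rightarrow> ('s, 'a) gip_state \<Rightarrow> bool"
  for P \<gamma> \<pi> where
  found: "gj st \<ge> 0 \<Longrightarrow> (rb, nb) \<in> Rinv P \<gamma> \<pi> (nat (gj st)) (gtau st) (gV st (gtau st)) \<Longrightarrow>
    gip_step P \<gamma> \<pi> st (st\<lparr> gu := nat (gj st), grbar := rb, gnubar := nb,
                          gj := (gl st + gj st) div 2 \<rparr>)"
| switch: "gj st \<ge> 0 \<Longrightarrow> Rinv P \<gamma> \<pi> (nat (gj st)) (gtau st) (gV st (gtau st)) = {} \<Longrightarrow>
    int (gu st) = gj st + 1 \<Longrightarrow>
    gip_step P \<gamma> \<pi> st (st\<lparr> gZ := gu st # gZ st, gR := grbar st # gR st,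
        gV := (\<lambda>t. if gu st \<le> t \<and> t < gtau st then gnubar st t else gV st t),
        gtau := gu st, gl := -1, gj := (-1 + int (gu st)) div 2 \<rparr>)"
| noswitch: "gj st \<ge> 0 \<Longrightarrow> Rinv P \<gamma> \<pi> (nat (gj st)) (gtau st) (gV st (gtau st)) = {} \<Longrightarrow>
    int (gu st) \<noteq> gj st + 1 \<Longrightarrow>
    gip_step P \<gamma> \<pi> st (st\<lparr> gl := gj st, gj := (gj st + int (gu st)) div 2 \<rparr>)"

text \<open>Z is a possible list of switch times returned by Algorithm 1 (the final
  post-loop updates do not change Z). Z = [t_k, ..., t_1].\<close>
definition gip_output ::
  "('s::finite \<Rightarrow> 'a \<Rightarrow> 's \<Rightarrow> real) \<Rightarrow> real \<Rightarrow> nat \<Rightarrow> (nat \<Rightarrow> 's \<Rightarrow> 'a \<Rightarrow> real) \<Rightarrow> nat list \<Rightarrow> bool" where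
  "gip_output P \<gamma> T \<pi> Z \<longleftrightarrow>
     (\<exists>st. (gip_step P \<gamma> \<pi>)\<^sup>*\<^sup>* (gip_init T) st \<and> gj st < 0 \<and> Z = gZ st)"

end

theory Submission
  imports Defs
begin

text \<open>Whether \<open>Rinv P \<gamma> \<pi> i j \<nu>\<^sub>o\<close> is empty does not depend on the boundary value
  \<open>\<nu>\<^sub>o\<close>: shifting every \<open>\<nu>\<^sub>l\<close> by a potential \<open>d\<close> and the reward by \<open>d - \<gamma> P d\<close> preserves all
  Bellman residuals. So solvability is a property of the segment \<open>[i, j)\<close> alone, inherited by
  subsegments. Algorithm 1 records a switch time \<open>u\<close> only after \<open>[u - 1, \<tau>)\<close> was found
  unsolvable, so each returned time is the leftmost start of a solvable segment ending at the
  previous one. A feasible sequence consists of solvable segments, and the greedy times stay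
  ahead: if \<open>t_i \<le> t'_i\<close> then \<open>[t'_(i+1), t_i)\<close> is solvable, hence \<open>t_(i+1) \<le> t'_(i+1)\<close>.\<close>

definition segment_solvable ::
  "('s::finite \<Rightarrow> 'a \<Rightarrow> 's \<Rightarrow> real) \<Rightarrow> real \<Rightarrow> (nat \<Rightarrow> 's \<Rightarrow> 'a \<Rightarrow> real) \<Rightarrow> nat \<Rightarrow> nat \<Rightarrow> bool" where
  "segment_solvable P \<gamma> \<pi> i j \<longleftrightarrow> Rinv P \<gamma> \<pi> i j (\<lambda>_. 0) \<noteq> {}"

lemma bellman_res_add_potential:
  "bellman_res P \<gamma> (\<lambda>s a. rb s a + d s - \<gamma> * (\<Sum>s'\<in>UNIV. P s a s' * d s'))
     (\<lambda>s. x s + d s) (\<lambda>s. y s + d s) s a = bellman_res P \<gamma> rb x y s a"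
  unfolding bellman_res_def by (simp add: distrib_left sum.distrib algebra_simps)

lemma Rinv_add_potential:
  assumes "(rb, \<nu>) \<in> Rinv P \<gamma> \<pi> i j \<nu>\<^sub>o"
  shows "(\<lambda>s a. rb s a + d s - \<gamma> * (\<Sum>s'\<in>UNIV. P s a s' * d s'), \<lambda>l s. \<nu> l s + d s)
     \<in> Rinv P \<gamma> \<pi> i j (\<lambda>s. \<nu>\<^sub>o s + d s)"
proof -
  have "(if Suc l = j then (\<lambda>s. \<nu>\<^sub>o s + d s) else (\<lambda>s. \<nu> (Suc l) s + d s)) =
      (\<lambda>s. (if Suc l = j then \<nu>\<^sub>o else \<nu> (Suc l)) s + d s)" for l
    by auto
  with assms show ?thesis
    unfolding Rinv_def by (simp add: bellman_res_add_potential)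
qed

lemma Rinv_nonempty_iff_segment_solvable:
  "Rinv P \<gamma> \<pi> i j \<nu>\<^sub>o \<noteq> {} \<longleftrightarrow> segment_solvable P \<gamma> \<pi> i j"
proof -
  have "Rinv P \<gamma> \<pi> i j \<nu>\<^sub>2 \<noteq> {}" if "Rinv P \<gamma> \<pi> i j \<nu>\<^sub>1 \<noteq> {}" for \<nu>\<^sub>1 \<nu>\<^sub>2
  proof -
    from that obtain rb \<nu> where "(rb, \<nu>) \<in> Rinv P \<gamma> \<pi> i j \<nu>\<^sub>1" by auto
    from Rinv_add_potential[OF this, of "\<lambda>s. \<nu>\<^sub>2 s - \<nu>\<^sub>1 s"] show ?thesis by auto
  qed
  then show ?thesis unfolding segment_solvable_def by blast
qed

lemma segment_solvable_subsegment:
  assumes "segment_solvable P \<gamma> \<pi> i j" and "i \<le> i'" and "j' \<le> j"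
  shows "segment_solvable P \<gamma> \<pi> i' j'"
proof -
  obtain rb \<nu> where sol: "(rb, \<nu>) \<in> Rinv P \<gamma> \<pi> i j (\<lambda>_. 0)"
    using assms(1) unfolding segment_solvable_def by auto
  have "(rb, \<nu>) \<in> Rinv P \<gamma> \<pi> i' j' (if j' = j then (\<lambda>_. 0) else \<nu> j')"
    unfolding Rinv_def
  proof (clarify)
    fix l s a assume l: "i' \<le> l" "l < j'"
    have "(if Suc l = j' then (if j' = j then (\<lambda>_. 0) else \<nu> j') else \<nu> (Suc l))
        = (if Suc l = j then (\<lambda>_. 0) else \<nu> (Suc l))"
      using l assms(3) by auto
    with sol l assms(2,3) show "bellman_res P \<gamma> rb (\<nu> l)
        (if Suc l = j' then (if j' = j then (\<lambda>_. 0) else \<nu> j') else \<nu> (Suc l)) s a = ln (\<pi> l s a)"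
      unfolding Rinv_def by auto
  qed
  then show ?thesis using Rinv_nonempty_iff_segment_solvable by blast
qed

lemma greedy_stays_ahead:
  fixes ok :: "nat \<Rightarrow> nat \<Rightarrow> bool" and t t' :: "nat \<Rightarrow> nat"
  assumes ok_shrink: "\<And>i j j'. ok i j \<Longrightarrow> j' \<le> j \<Longrightarrow> ok i j'"
    and greedy: "\<And>i j. i < n \<Longrightarrow> j < t (Suc i) \<Longrightarrow> \<not> ok j (t i)"
    and feasible: "\<And>i. i < m \<Longrightarrow> ok (t' (Suc i)) (t' i)"
    and start: "t 0 \<le> t' 0"
  shows "i \<le> min n m \<Longrightarrow> t i \<le> t' i"
proof (induction i)
  case 0
  then show ?case using start by simp
next
  case (Suc i)
  then have ahead: "t i \<le> t' i" and "i < n" "i < m" by auto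
  have "ok (t' (Suc i)) (t i)" using ok_shrink[OF feasible[OF \<open>i < m\<close>] ahead] .
  then show ?case using greedy[OF \<open>i < n\<close>] by (meson not_less)
qed

text \<open>\<open>T # rev (gZ st)\<close> is the list \<open>t_0 = T, t_1, ..., t_k\<close> of switch times found so far.\<close>

definition gip_invariant ::
  "('s::finite \<Rightarrow> 'a \<Rightarrow> 's \<Rightarrow> real) \<Rightarrow> real \<Rightarrow> (nat \<Rightarrow> 's \<Rightarrow> 'a \<Rightarrow> real) \<Rightarrow> nat
    \<Rightarrow> ('s, 'a) gip_state \<Rightarrow> bool" where
  "gip_invariant P \<gamma> \<pi> T st \<longleftrightarrow>
     (let ts = T # rev (gZ st) in
      gtau st = last ts \<and>
      (\<forall>i < length (gZ st). \<forall>j < ts ! Suc i. \<not> segment_solvable P \<gamma> \<pi> j (ts ! i)))"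

lemma gip_invariant_init: "gip_invariant P \<gamma> \<pi> T (gip_init T)"
  unfolding gip_invariant_def gip_init_def by simp

lemma gip_invariant_step:
  assumes "gip_step P \<gamma> \<pi> st st'" and "gip_invariant P \<gamma> \<pi> T st"
  shows "gip_invariant P \<gamma> \<pi> T st'"
  using assms(1)
proof cases
  case switch
  let ?u = "gu st"
  define ts where "ts = T # rev (gZ st)"
  have ts': "T # rev (gZ st') = ts @ [?u]" and tau': "gtau st' = ?u"
    using switch(1) by (simp_all add: ts_def)
  have old: "(ts @ [?u]) ! i = ts ! i" if "i \<le> length (gZ st)" for i
    using that unfolding ts_def
    by (metis append_Cons length_Cons length_rev less_Suc_eq_le nth_append)
  have new: "(ts @ [?u]) ! Suc (length (gZ st)) = ?u"
    by (simp add: ts_def nth_append)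
  have tau: "gtau st = ts ! length (gZ st)"
    and invariant: "\<And>i j. i < length (gZ st) \<Longrightarrow> j < ts ! Suc i \<Longrightarrow>
        \<not> segment_solvable P \<gamma> \<pi> j (ts ! i)"
    using assms(2) unfolding gip_invariant_def ts_def by (simp_all add: last_conv_nth)
  have maximal: "\<not> segment_solvable P \<gamma> \<pi> j (gtau st)" if "j < ?u" for j
  proof
    assume "segment_solvable P \<gamma> \<pi> j (gtau st)"
    moreover have "j \<le> nat (gj st)" using that switch(2,4) by linarith
    ultimately have "segment_solvable P \<gamma> \<pi> (nat (gj st)) (gtau st)"
      using segment_solvable_subsegment by blast
    then show False using switch(3) Rinv_nonempty_iff_segment_solvable by blast
  qed
  have "\<not> segment_solvable P \<gamma> \<pi> j ((ts @ [?u]) ! i)"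
    if i: "i < length (gZ st')" and j: "j < (ts @ [?u]) ! Suc i" for i j
  proof -
    from i consider "i < length (gZ st)" | "i = length (gZ st)"
      using switch(1) by fastforce
    then show ?thesis
    proof cases
      case 1
      then show ?thesis using invariant j old[of i] old[of "Suc i"] by simp
    next
      case 2
      then show ?thesis using maximal j new old[of i] tau by simp
    qed
  qed
  then show ?thesis unfolding gip_invariant_def Let_def ts' tau' by simp
qed (use assms(2) in \<open>simp_all add: gip_invariant_def\<close>)

lemma gip_invariant_reachable:
  "(gip_step P \<gamma> \<pi>)\<^sup>*\<^sup>* (gip_init T) st \<Longrightarrow> gip_invariant P \<gamma> \<pi> T st"
  by (induction rule: rtranclp_induct) (auto intro: gip_invariant_init gip_invariant_step)

lemma feasible_switch_segment_solvable:
  assumes "feasible_switch P \<gamma> T \<pi> k' t'" and "i < k'"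
  shows "segment_solvable P \<gamma> \<pi> (t' (Suc i)) (if i = 0 then T else t' i)"
proof -
  define ext where "ext i = (if i = 0 then T else if i = Suc k' then 0 else t' i)" for i
  obtain r \<nu> where "(r, \<nu>) \<in> RE P \<gamma> T \<pi>"
    and const: "\<forall>i\<le>k'. \<forall>t s. ext (Suc i) \<le> t \<and> t < ext i \<and> ext (Suc i) \<le> s \<and> s < ext i
      \<longrightarrow> r t = r s"
    using assms(1) unfolding feasible_switch_def Let_def ext_def by blast
  then have bellman: "\<And>t s a. t < T \<Longrightarrow> bellman_res P \<gamma> (r t) (\<nu> t) (\<nu> (Suc t)) s a = ln (\<pi> t s a)"
    unfolding RE_def by blast
  have "ext i \<le> T"
    using assms unfolding feasible_switch_def ext_def by (auto simp: less_imp_le)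
  have "(r (ext (Suc i)), \<nu>) \<in> Rinv P \<gamma> \<pi> (ext (Suc i)) (ext i) (\<nu> (ext i))"
    unfolding Rinv_def
  proof (clarify)
    fix l s a assume l: "ext (Suc i) \<le> l" "l < ext i"
    have "r l = r (ext (Suc i))" using const assms(2) l by (meson less_imp_le le_less_trans order_refl)
    moreover have "l < T" using l \<open>ext i \<le> T\<close> by linarith
    ultimately show "bellman_res P \<gamma> (r (ext (Suc i))) (\<nu> l)
        (if Suc l = ext i then \<nu> (ext i) else \<nu> (Suc l)) s a = ln (\<pi> l s a)"
      using bellman by (metis (full_types))
  qed
  then show ?thesis
    using Rinv_nonempty_iff_segment_solvable assms(2) unfolding ext_def by force
qed

theorem lemma3:
  fixes P :: "'s::finite \<Rightarrow> 'a::finite \<Rightarrow> 's \<Rightarrow> real"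
    and \<gamma> :: real and T :: nat and \<pi> :: "nat \<Rightarrow> 's \<Rightarrow> 'a \<Rightarrow> real"
    and Z :: "nat list" and k' :: nat and t' :: "nat \<Rightarrow> nat"
  assumes "\<forall>s a s'. 0 \<le> P s a s'"
    and "\<forall>s a. (\<Sum>s'\<in>UNIV. P s a s') = 1"
    and "0 \<le> \<gamma>" and "\<gamma> \<le> 1" and "1 \<le> T"
    and "\<forall>t<T. \<forall>s a. 0 < \<pi> t s a \<and> \<pi> t s a \<le> 1"
    and "\<forall>t<T. \<forall>s. (\<Sum>a\<in>UNIV. \<pi> t s a) = 1"
    and "gip_output P \<gamma> T \<pi> Z"
    and "feasible_switch P \<gamma> T \<pi> k' t'"
  shows "\<forall>i. 1 \<le> i \<and> i \<le> min (length Z) k' \<longrightarrow> Z ! (length Z - i) \<le> t' i"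
proof -
  obtain st where reach: "(gip_step P \<gamma> \<pi>)\<^sup>*\<^sup>* (gip_init T) st" and Z: "Z = gZ st"
    using assms(8) unfolding gip_output_def by blast
  from reach have "gip_invariant P \<gamma> \<pi> T st" by (rule gip_invariant_reachable)
  then have greedy: "\<And>i j. i < length Z \<Longrightarrow> j < (T # rev Z) ! Suc i
      \<Longrightarrow> \<not> segment_solvable P \<gamma> \<pi> j ((T # rev Z) ! i)"
    unfolding gip_invariant_def Z Let_def by blast
  define tf where "tf i = (if i = 0 then T else t' i)" for i
  have feasible: "\<And>i. i < k' \<Longrightarrow> segment_solvable P \<gamma> \<pi> (tf (Suc i)) (tf i)"
    using feasible_switch_segment_solvable[OF assms(9)] by (simp add: tf_def)
  have ahead: "(T # rev Z) ! i \<le> tf i" if "i \<le> min (length Z) k'" for i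
    using greedy_stays_ahead[where ok = "segment_solvable P \<gamma> \<pi>" and t = "(!) (T # rev Z)"
        and t' = tf,
        OF segment_solvable_subsegment[OF _ order_refl] greedy feasible _ that]
    by (simp add: tf_def)
  show ?thesis
  proof (intro allI impI)
    fix i assume i: "1 \<le> i \<and> i \<le> min (length Z) k'"
    with ahead[of i] show "Z ! (length Z - i) \<le> t' i" by (cases i) (auto simp: tf_def rev_nth)
  qed
qed

end
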